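(* Let the mesh consist of cells $I_1,\dots,I_N$, and fix an initial state $U^{1/2}\in\Omega$. Construct polynomials $P^*_1,\dots,P^*_N$ recursively as follows. For each $i$, $P^*_i$ is the vector-valued polynomial of degree $\le s$ satisfying - $P^*_i(x_{i-1/2})=U^{i-1/2}$, where $U^{1/2}$ is the given state and $U^{i-1/2}=P^*_{i-1}(x_{i-1/2})$ for $i\ge2$; - $D_f(P^*_i(x_i^m))\,(P^*_i)'(x_i^m)=S(P^*_i(x_i^m))H_x(x_i^m)$ for $m=1,\dots,s$. Assume these polynomials exist. Set $\widetilde U^*_i=\sum_{m=1}^s b_m P^*_i(x_i^m)$. Assume that the local collocation problem, the forward collocation problem and the backward collocation problem each have a unique solution whenever they are posed during the application of the local solver to the data $\widetilde W=\widetilde U^*_i$ at the cells $i$ considered below. Assume also that $Q_i(x;\{0\})\equiv0$ and $\mathbb F(U,U)=f(U)$. Then, for every cell $i$ whose stencil $\{i-l,\dots,i+r\}$ is contained in $\{1,\dots,N\}$, the right-hand side of the $i$-th equation of the semi-discrete scheme vanishes at $\{\widetilde U^*_j\}$. In other words, $\{\widetilde U^*_i\}$ is a discrete stationary solution at these cells.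
   Context: Consider a system of balance laws $U_t+f(U)_x=S(U)H_x$, where $U\in\Omega\subset\mathbb R^N$, $f$ is differentiable with Jacobian $D_f$, and $H$ is differentiable. Mesh. The cells are $I_i=[x_{i-1/2},x_{i+1/2}]$, all of length $\Delta x$. Gauss–Legendre collocation. Fix the $s$-stage Gauss–Legendre collocation method. Its nodes $c_1,\dots,c_s\in(0,1)$ and weights $b_1,\dots,b_s$ are those of the $s$-point Gauss quadrature on $[0,1]$. In cell $I_i$ the collocation points are $x_i^m=x_{i-1/2}+c_m\Delta x$. The same Gauss rule, with nodes $x_i^m$ and weights $b_m$ ($M=s$), is used as the cell quadrature. Stencils. The stencils are $\mathcal S_i=\{i-l,\dots,i+r\}$ for fixed integers $l,r\ge0$. Local solver, given $i$ and $\widetilde W$. - (a) Local collocation problem: find the polynomial $P_i$ of degree $\le s$ with $\sum_{m=1}^s b_mP_i(x_i^m)=\widetilde W$ and $D_f(P_i(x_i^m))P_i'(x_i^m)=S(P_i(x_i^m))H_x(x_i^m)$ for $m=1,\dots,s$. Set $U^{*,m}_{i,i}=P_i(x_i^m)$ and $U_i^{*,i\pm1/2}=P_i(x_{i\pm1/2})$. - (b) Forward collocation problem: for $j=i+1,\dots,i+r$, successively find the polynomial $P_j$ of degree $\le s$ with $P_j(x_{j-1/2})=P_{j-1}(x_{j-1/2})$ and the collocation conditions at the points $x_j^m$. Set $U^{*,m}_{i,j}=P_j(x_j^m)$. - (c) Backward collocation problem: for $j=i-1,\dots,i-l$, successively find the polynomial $P_j$ of degree $\le s$ with $P_j(x_{j+1/2})=P_{j+1}(x_{j+1/2})$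 and the collocation conditions at the points $x_j^m$. Set $U^{*,m}_{i,j}=P_j(x_j^m)$. Reconstruction. $Q_i(x;\{V_j\}_{j\in\mathcal S_i})$ is a standard reconstruction operator. Given cell values $\{\widetilde U_i\}$, at each cell $i$ proceed as follows. - Apply the local solver with $\widetilde W=\widetilde U_i$. - Set $V_j=\widetilde U_j-\sum_m b_mU^{*,m}_{i,j}$ and $Q_i(x)=Q_i(x;\{V_j\})$. - Define - $P^m_i=U^{*,m}_{i,i}+Q_i(x_i^m)$, - $U^+_{i-1/2}=U_i^{*,i-1/2}+Q_i(x_{i-1/2})$, - $U^-_{i+1/2}=U_i^{*,i+1/2}+Q_i(x_{i+1/2})$. Numerical method. The semi-discrete scheme is $$\frac{d\widetilde U_i}{dt}=-\frac{1}{\Delta x}(F_{i+1/2}-F_{i-1/2})+\frac1{\Delta x}S_i,$$ with $F_{i+1/2}=\mathbb F(U^-_{i+1/2},U^+_{i+1/2})$ and $$S_i=f(U_i^{*,i+1/2})-f(U_i^{*,i-1/2})+\Delta x\sum_m b_m\big(S(P_i^m)-S(U^{*,m}_{i,i})\big)H_x(x_i^m).$$ *)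

theory Defs
  imports "HOL-Analysis.Analysis" "HOL-Computational_Algebra.Polynomial"
begin

text \<open>s-point Gauss(-Legendre) quadrature on [0,1]: s distinct increasing nodes
  c_1 < ... < c_s in (0,1) with weights b_1..b_s, exact for all polynomials of
  degree at most 2s-1 (this characterises the Gauss rule uniquely).\<close>
definition gauss_legendre :: "nat \<Rightarrow> (nat \<Rightarrow> real) \<Rightarrow> (nat \<Rightarrow> real) \<Rightarrow> bool" where
  "gauss_legendre s c b \<longleftrightarrow> s \<ge> 1 \<and>
     (\<forall>m\<in>{1..s}. 0 < c m \<and> c m < 1) \<and>
     (\<forall>m\<in>{1..s}. \<forall>n\<in>{1..s}. m < n \<longrightarrow> c m < c n) \<and>
     (\<forall>p :: real poly. degree p \<le> 2 * s - 1 \<longrightarrow>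
        (\<Sum>m = 1..s. b m * poly p (c m)) = integral {0..1} (poly p))"

definition vpoly :: "nat \<Rightarrow> (real \<Rightarrow> 'v::real_vector) \<Rightarrow> bool" where
  "vpoly s P \<longleftrightarrow> (\<exists>a :: nat \<Rightarrow> 'v. \<forall>x. P x = (\<Sum>k\<le>s. x ^ k *\<^sub>R a k))"

record 'v blscheme =
  flx    :: "'v \<Rightarrow> 'v"
  jac    :: "'v \<Rightarrow> 'v \<Rightarrow> 'v"           (* D_f(U), applied to a vector *)
  src    :: "'v \<Rightarrow> 'v"
  Hx     :: "real \<Rightarrow> real"
  nflux  :: "'v \<Rightarrow> 'v \<Rightarrow> 'v"
  recon  :: "int \<Rightarrow> (int \<Rightarrow> 'v) \<Rightarrow> real \<Rightarrow> 'v"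
  deg    :: nat
  nodes  :: "nat \<Rightarrow> real"
  weights :: "nat \<Rightarrow> real"
  xorig  :: real
  dx     :: real
  lst    :: nat
  rst    :: nat

text \<open>Mesh: x_{i-1/2} = xL i, x_{i+1/2} = xR i, collocation points x_i^m.\<close>
definition xL :: "'v blscheme \<Rightarrow> int \<Rightarrow> real" where
  "xL sc i = xorig sc + real_of_int (i - 1) * dx sc"

definition xR :: "'v blscheme \<Rightarrow> int \<Rightarrow> real" where
  "xR sc i = xorig sc + real_of_int i * dx sc"

definition xq :: "'v blscheme \<Rightarrow> int \<Rightarrow> nat \<Rightarrow> real" where
  "xq sc i m = xL sc i + nodes sc m * dx sc"

definition stencil :: "'v blscheme \<Rightarrow> int \<Rightarrow> int set" where
  "stencil sc i = {i - int (lst sc) .. i + int (rst sc)}"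

definition cquad :: "'v::real_vector blscheme \<Rightarrow> int \<Rightarrow> (real \<Rightarrow> 'v) \<Rightarrow> 'v" where
  "cquad sc i P = (\<Sum>m = 1..deg sc. weights sc m *\<^sub>R P (xq sc i m))"

definition colloc :: "'v::real_normed_vector blscheme \<Rightarrow> int \<Rightarrow> (real \<Rightarrow> 'v) \<Rightarrow> bool" where
  "colloc sc j P \<longleftrightarrow> (\<forall>m\<in>{1..deg sc}.
      jac sc (P (xq sc j m)) (vector_derivative P (at (xq sc j m)))
        = Hx sc (xq sc j m) *\<^sub>R src sc (P (xq sc j m)))"

definition local_prob :: "'v::real_normed_vector blscheme \<Rightarrow> int \<Rightarrow> 'v \<Rightarrow> (real \<Rightarrow> 'v) \<Rightarrow> bool" where
  "local_prob sc i W P \<longleftrightarrow> vpoly (deg sc) P \<and> cquad sc i P = W \<and> colloc sc i P"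

definition fwd_prob :: "'v::real_normed_vector blscheme \<Rightarrow> int \<Rightarrow> (real \<Rightarrow> 'v) \<Rightarrow> (real \<Rightarrow> 'v) \<Rightarrow> bool" where
  "fwd_prob sc j Pprev P \<longleftrightarrow> vpoly (deg sc) P \<and> P (xL sc j) = Pprev (xL sc j) \<and> colloc sc j P"

definition bwd_prob :: "'v::real_normed_vector blscheme \<Rightarrow> int \<Rightarrow> (real \<Rightarrow> 'v) \<Rightarrow> (real \<Rightarrow> 'v) \<Rightarrow> bool" where
  "bwd_prob sc j Pnext P \<longleftrightarrow> vpoly (deg sc) P \<and> P (xR sc j) = Pnext (xR sc j) \<and> colloc sc j P"

text \<open>Local solver: fwd_chain sc i W k = P_{i+k}, bwd_chain sc i W k = P_{i-k}.\<close>
fun fwd_chain :: "'v::real_normed_vector blscheme \<Rightarrow> int \<Rightarrow> 'v \<Rightarrow> nat \<Rightarrow> real \<Rightarrow> 'v" where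
  "fwd_chain sc i W 0 = (THE P. local_prob sc i W P)"
| "fwd_chain sc i W (Suc k) = (THE P. fwd_prob sc (i + int (Suc k)) (fwd_chain sc i W k) P)"

fun bwd_chain :: "'v::real_normed_vector blscheme \<Rightarrow> int \<Rightarrow> 'v \<Rightarrow> nat \<Rightarrow> real \<Rightarrow> 'v" where
  "bwd_chain sc i W 0 = (THE P. local_prob sc i W P)"
| "bwd_chain sc i W (Suc k) = (THE P. bwd_prob sc (i - int (Suc k)) (bwd_chain sc i W k) P)"

definition solverP :: "'v::real_normed_vector blscheme \<Rightarrow> int \<Rightarrow> 'v \<Rightarrow> int \<Rightarrow> real \<Rightarrow> 'v" where
  "solverP sc i W j = (if i \<le> j then fwd_chain sc i W (nat (j - i)) else bwd_chain sc i W (nat (i - j)))"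

definition solver_unique :: "'v::real_normed_vector blscheme \<Rightarrow> int \<Rightarrow> 'v \<Rightarrow> bool" where
  "solver_unique sc i W \<longleftrightarrow>
     (\<exists>!P. local_prob sc i W P) \<and>
     (\<forall>k < rst sc. \<exists>!P. fwd_prob sc (i + int (Suc k)) (fwd_chain sc i W k) P) \<and>
     (\<forall>k < lst sc. \<exists>!P. bwd_prob sc (i - int (Suc k)) (bwd_chain sc i W k) P)"

definition reconQ :: "'v::real_normed_vector blscheme \<Rightarrow> (int \<Rightarrow> 'v) \<Rightarrow> int \<Rightarrow> real \<Rightarrow> 'v" where
  "reconQ sc Ut i = recon sc i (\<lambda>j. if j \<in> stencil sc i
       then Ut j - cquad sc j (solverP sc i (Ut i) j) else 0)"

definition Pm :: "'v::real_normed_vector blscheme \<Rightarrow> (int \<Rightarrow> 'v) \<Rightarrow> int \<Rightarrow> nat \<Rightarrow> 'v" where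
  "Pm sc Ut i m = solverP sc i (Ut i) i (xq sc i m) + reconQ sc Ut i (xq sc i m)"

definition Uplus :: "'v::real_normed_vector blscheme \<Rightarrow> (int \<Rightarrow> 'v) \<Rightarrow> int \<Rightarrow> 'v" where
  "Uplus sc Ut i = solverP sc i (Ut i) i (xL sc i) + reconQ sc Ut i (xL sc i)"

definition Uminus :: "'v::real_normed_vector blscheme \<Rightarrow> (int \<Rightarrow> 'v) \<Rightarrow> int \<Rightarrow> 'v" where
  "Uminus sc Ut i = solverP sc i (Ut i) i (xR sc i) + reconQ sc Ut i (xR sc i)"

definition numflux :: "'v::real_normed_vector blscheme \<Rightarrow> (int \<Rightarrow> 'v) \<Rightarrow> int \<Rightarrow> 'v" where
  "numflux sc Ut i = nflux sc (Uminus sc Ut i) (Uplus sc Ut (i + 1))"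

definition srcterm :: "'v::real_normed_vector blscheme \<Rightarrow> (int \<Rightarrow> 'v) \<Rightarrow> int \<Rightarrow> 'v" where
  "srcterm sc Ut i =
     flx sc (solverP sc i (Ut i) i (xR sc i)) - flx sc (solverP sc i (Ut i) i (xL sc i))
     + dx sc *\<^sub>R (\<Sum>m = 1..deg sc. weights sc m *\<^sub>R (Hx sc (xq sc i m) *\<^sub>R
          (src sc (Pm sc Ut i m) - src sc (solverP sc i (Ut i) i (xq sc i m)))))"

definition scheme_rhs :: "'v::real_normed_vector blscheme \<Rightarrow> (int \<Rightarrow> 'v) \<Rightarrow> int \<Rightarrow> 'v" where
  "scheme_rhs sc Ut i =
     - ((1 / dx sc) *\<^sub>R (numflux sc Ut i - numflux sc Ut (i - 1)))
     + (1 / dx sc) *\<^sub>R srcterm sc Ut i"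

end

theory Submission
  imports Defs
begin

text \<open>Well-balancing: the stationary polynomials \<open>P\<^sup>*\<^sub>j\<close> solve every collocation
  problem the local solver poses, so by uniqueness the solver at a cell \<open>c\<close> returns
  exactly \<open>P\<^sup>*\<^sub>j\<close> on the stencil of \<open>c\<close>.  Hence all defects \<open>V\<^sub>j\<close> vanish, the
  reconstruction \<open>Q\<^sub>c\<close> is zero, the interface values from both sides coincide by
  continuity of the \<open>P\<^sup>*\<close> chain, the consistent numerical flux reduces to \<open>f\<close>, and
  the flux difference cancels exactly against the source term.\<close>

definition collocation_chain ::
    "'v::real_normed_vector blscheme \<Rightarrow> int set \<Rightarrow> (int \<Rightarrow> real \<Rightarrow> 'v) \<Rightarrow> bool" where
  "collocation_chain sc J P \<longleftrightarrow>
     (\<forall>j\<in>J. vpoly (deg sc) (P j) \<and> colloc sc j (P j)) \<and>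
     (\<forall>j\<in>J. j - 1 \<in> J \<longrightarrow> P j (xL sc j) = P (j - 1) (xL sc j))"

lemma collocation_chain_subset:
  "collocation_chain sc J P \<Longrightarrow> J' \<subseteq> J \<Longrightarrow> collocation_chain sc J' P"
  unfolding collocation_chain_def by blast

lemma xR_eq_xL_succ: "xR sc j = xL sc (j + 1)"
  unfolding xR_def xL_def by simp

lemma collocation_chain_interface:
  assumes "collocation_chain sc J P" "j \<in> J" "j + 1 \<in> J"
  shows "P (j + 1) (xR sc j) = P j (xR sc j)"
  using assms unfolding collocation_chain_def xR_eq_xL_succ
  by (metis add_diff_cancel_right')

lemma local_solution_collocation_chain:
  assumes chain: "collocation_chain sc (stencil sc c) P"
    and uq: "solver_unique sc c (cquad sc c (P c))"
  shows "(THE Q. local_prob sc c (cquad sc c (P c)) Q) = P c"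
proof (rule the1_equality)
  show "\<exists>!Q. local_prob sc c (cquad sc c (P c)) Q"
    using uq unfolding solver_unique_def by blast
  have "c \<in> stencil sc c" unfolding stencil_def by simp
  then show "local_prob sc c (cquad sc c (P c)) (P c)"
    using chain unfolding local_prob_def collocation_chain_def by blast
qed

lemma fwd_chain_collocation_chain:
  assumes chain: "collocation_chain sc (stencil sc c) P"
    and uq: "solver_unique sc c (cquad sc c (P c))"
    and k: "k \<le> rst sc"
  shows "fwd_chain sc c (cquad sc c (P c)) k = P (c + int k)"
  using k
proof (induction k)
  case 0
  then show ?case using local_solution_collocation_chain[OF chain uq] by simp
next
  case (Suc k)
  let ?j = "c + int (Suc k)"
  have IH: "fwd_chain sc c (cquad sc c (P c)) k = P (?j - 1)"
    using Suc by simp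
  have j: "?j \<in> stencil sc c" "?j - 1 \<in> stencil sc c"
    using Suc.prems unfolding stencil_def by auto
  show ?case
  proof (simp only: fwd_chain.simps, rule the1_equality)
    show "\<exists>!Q. fwd_prob sc ?j (fwd_chain sc c (cquad sc c (P c)) k) Q"
      using uq Suc.prems unfolding solver_unique_def by simp
    show "fwd_prob sc ?j (fwd_chain sc c (cquad sc c (P c)) k) (P ?j)"
      unfolding fwd_prob_def IH using chain j unfolding collocation_chain_def by blast
  qed
qed

lemma bwd_chain_collocation_chain:
  assumes chain: "collocation_chain sc (stencil sc c) P"
    and uq: "solver_unique sc c (cquad sc c (P c))"
    and k: "k \<le> lst sc"
  shows "bwd_chain sc c (cquad sc c (P c)) k = P (c - int k)"
  using k
proof (induction k)
  case 0
  then show ?case using local_solution_collocation_chain[OF chain uq] by simp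
next
  case (Suc k)
  let ?j = "c - int (Suc k)"
  have IH: "bwd_chain sc c (cquad sc c (P c)) k = P (?j + 1)"
    using Suc by simp
  have j: "?j \<in> stencil sc c" "?j + 1 \<in> stencil sc c"
    using Suc.prems unfolding stencil_def by auto
  have interface: "P (?j + 1) (xR sc ?j) = P ?j (xR sc ?j)"
    using collocation_chain_interface[OF chain j] .
  show ?case
  proof (simp only: bwd_chain.simps, rule the1_equality)
    show "\<exists>!Q. bwd_prob sc ?j (bwd_chain sc c (cquad sc c (P c)) k) Q"
      using uq Suc.prems unfolding solver_unique_def by simp
    show "bwd_prob sc ?j (bwd_chain sc c (cquad sc c (P c)) k) (P ?j)"
      unfolding bwd_prob_def IH using chain j interface
      unfolding collocation_chain_def by simp
  qed
qed

lemma solverP_collocation_chain: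
  assumes chain: "collocation_chain sc (stencil sc c) P"
    and uq: "solver_unique sc c (cquad sc c (P c))"
    and j: "j \<in> stencil sc c"
  shows "solverP sc c (cquad sc c (P c)) j = P j"
proof (cases "c \<le> j")
  case True
  then have "nat (j - c) \<le> rst sc" using j unfolding stencil_def by auto
  then show ?thesis
    using True fwd_chain_collocation_chain[OF chain uq] unfolding solverP_def by simp
next
  case False
  then have "nat (c - j) \<le> lst sc" using j unfolding stencil_def by auto
  then show ?thesis
    using False bwd_chain_collocation_chain[OF chain uq] unfolding solverP_def by simp
qed

lemma reconQ_collocation_chain:
  assumes chain: "collocation_chain sc (stencil sc c) P"
    and uq: "solver_unique sc c (cquad sc c (P c))"
    and Q_zero: "\<forall>x. recon sc c (\<lambda>_. 0) x = 0"
  shows "reconQ sc (\<lambda>j. cquad sc j (P j)) c = (\<lambda>_. 0)"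
proof -
  have "(\<lambda>j. if j \<in> stencil sc c
            then cquad sc j (P j) - cquad sc j (solverP sc c (cquad sc c (P c)) j) else 0)
        = (\<lambda>_. 0)"
    using solverP_collocation_chain[OF chain uq] by auto
  then show ?thesis unfolding reconQ_def using Q_zero by auto
qed

lemma cell_values_collocation_chain:
  assumes chain: "collocation_chain sc (stencil sc c) P"
    and uq: "solver_unique sc c (cquad sc c (P c))"
    and Q_zero: "\<forall>x. recon sc c (\<lambda>_. 0) x = 0"
  defines "Ut \<equiv> \<lambda>j. cquad sc j (P j)"
  shows "Uplus sc Ut c = P c (xL sc c)"
    and "Uminus sc Ut c = P c (xR sc c)"
    and "Pm sc Ut c m = P c (xq sc c m)"
    and "solverP sc c (Ut c) c = P c"
proof -
  have "c \<in> stencil sc c" unfolding stencil_def by simp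
  then have "solverP sc c (Ut c) c = P c"
    unfolding Ut_def using solverP_collocation_chain[OF chain uq] by simp
  moreover have "reconQ sc Ut c = (\<lambda>_. 0)"
    unfolding Ut_def using reconQ_collocation_chain[OF chain uq Q_zero] .
  ultimately show "Uplus sc Ut c = P c (xL sc c)" "Uminus sc Ut c = P c (xR sc c)"
    "Pm sc Ut c m = P c (xq sc c m)" "solverP sc c (Ut c) c = P c"
    unfolding Uplus_def Uminus_def Pm_def by simp_all
qed

lemma numflux_collocation_chain:
  assumes chain: "collocation_chain sc (stencil sc c \<union> stencil sc (c + 1)) P"
    and uq: "solver_unique sc c (cquad sc c (P c))"
      "solver_unique sc (c + 1) (cquad sc (c + 1) (P (c + 1)))"
    and Q_zero: "\<forall>j x. recon sc j (\<lambda>_. 0) x = 0"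
    and F_cons: "\<forall>U. nflux sc U U = flx sc U"
  shows "numflux sc (\<lambda>j. cquad sc j (P j)) c = flx sc (P c (xR sc c))"
proof -
  have chain_c: "collocation_chain sc (stencil sc c) P"
    and chain_c1: "collocation_chain sc (stencil sc (c + 1)) P"
    using collocation_chain_subset[OF chain] by auto
  have "c \<in> stencil sc c \<union> stencil sc (c + 1)" "c + 1 \<in> stencil sc c \<union> stencil sc (c + 1)"
    unfolding stencil_def by simp_all
  then have "P (c + 1) (xR sc c) = P c (xR sc c)"
    using collocation_chain_interface[OF chain] by blast
  then show ?thesis
    using cell_values_collocation_chain(1)[OF chain_c1 uq(2)]
      cell_values_collocation_chain(2)[OF chain_c uq(1)] Q_zero F_cons
    by (simp add: numflux_def xR_eq_xL_succ)
qed

lemma srcterm_collocation_chain: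
  assumes chain: "collocation_chain sc (stencil sc c) P"
    and uq: "solver_unique sc c (cquad sc c (P c))"
    and Q_zero: "\<forall>x. recon sc c (\<lambda>_. 0) x = 0"
  shows "srcterm sc (\<lambda>j. cquad sc j (P j)) c = flx sc (P c (xR sc c)) - flx sc (P c (xL sc c))"
  unfolding srcterm_def cell_values_collocation_chain(3,4)[OF chain uq Q_zero] by simp

theorem mainTheorem3:
  fixes sc :: "'v::euclidean_space blscheme" and H :: "real \<Rightarrow> real"
    and \<Omega> :: "'v set" and N :: int and U12 :: 'v
    and Pstar :: "int \<Rightarrow> real \<Rightarrow> 'v" and i :: int
  assumes dx_pos: "dx sc > 0"
    and gauss: "gauss_legendre (deg sc) (nodes sc) (weights sc)"
    and f_diff: "\<forall>U\<in>\<Omega>. (flx sc has_derivative jac sc U) (at U)"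
    and H_diff: "\<forall>x. (H has_real_derivative Hx sc x) (at x)"
    and U12_in: "U12 \<in> \<Omega>"
    and Pstar_poly: "\<forall>j\<in>{1..N}. vpoly (deg sc) (Pstar j)"
    and Pstar_bc: "\<forall>j\<in>{1..N}. Pstar j (xL sc j) = (if j = 1 then U12 else Pstar (j - 1) (xL sc j))"
    and Pstar_colloc: "\<forall>j\<in>{1..N}. colloc sc j (Pstar j)"
    and unique: "\<forall>c\<in>{i - 1, i, i + 1}.
         solver_unique sc c (cquad sc c (Pstar c))"
    and Q_zero: "\<forall>j x. recon sc j (\<lambda>_. 0) x = 0"
    and F_cons: "\<forall>U. nflux sc U U = flx sc U"
    and stencils: "stencil sc (i - 1) \<union> stencil sc i \<union> stencil sc (i + 1) \<subseteq> {1..N}"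
  shows "scheme_rhs sc (\<lambda>j. cquad sc j (Pstar j)) i = 0"
proof -
  have "collocation_chain sc {1..N} Pstar"
    using Pstar_poly Pstar_colloc Pstar_bc unfolding collocation_chain_def by auto
  then have chain: "collocation_chain sc (stencil sc (i - 1) \<union> stencil sc i \<union> stencil sc (i + 1)) Pstar"
    using collocation_chain_subset stencils by blast
  have flux_right: "numflux sc (\<lambda>j. cquad sc j (Pstar j)) i = flx sc (Pstar i (xR sc i))"
    by (rule numflux_collocation_chain)
      (use collocation_chain_subset[OF chain] unique Q_zero F_cons in auto)
  have "i - 1 \<in> stencil sc (i - 1)" "i \<in> stencil sc i" unfolding stencil_def by simp_all
  then have "Pstar (i - 1) (xL sc i) = Pstar i (xL sc i)"
    using collocation_chain_interface[OF chain, of "i - 1"] by (simp add: xR_eq_xL_succ)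
  then have flux_left: "numflux sc (\<lambda>j. cquad sc j (Pstar j)) (i - 1) = flx sc (Pstar i (xL sc i))"
    using numflux_collocation_chain[of sc "i - 1" Pstar] collocation_chain_subset[OF chain]
      unique Q_zero F_cons by (auto simp: xR_eq_xL_succ)
  have source: "srcterm sc (\<lambda>j. cquad sc j (Pstar j)) i
      = flx sc (Pstar i (xR sc i)) - flx sc (Pstar i (xL sc i))"
    using srcterm_collocation_chain[of sc i Pstar] collocation_chain_subset[OF chain] unique Q_zero
    by auto
  show ?thesis
    unfolding scheme_rhs_def flux_right flux_left source by simp
qed

end
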